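(* Let $\sigma$ be a positive integer, $a\in\mathbb{D}$, and for $l\ge1$ let $B_{l,a}(z)=\frac{\sqrt{1-|a|^2}}{1-\overline{a}z}\left(\frac{z-a}{1-\overline{a}z}\right)^{l-1}$ (the Laguerre system). Then there is a constant $C_a$ depending only on $a$ (and $\sigma$) such that for every $f\in H^2_\sigma(\mathbb{D})$ and every integer $n\ge1$, $$\left\|f-\sum_{l=1}^{n}\langle f,B_{l,a}\rangle B_{l,a}\right\|_{H^2}\le C_a\,\frac{1}{n^{\sigma}}\,\|f\|_{H^2_\sigma}.$$
   Context: $\mathbb{D}$ is the open unit disc; $H^2(\mathbb{D})$ the Hardy space with inner product $\langle f,g\rangle=\frac{1}{2\pi}\int_0^{2\pi}f(e^{it})\overline{g(e^{it})}\,dt$; $\{B_{l,a}\}_{l\ge1}$ is a complete orthonormal system of $H^2(\mathbb{D})$. For $\sigma\ge0$, $H^2_\sigma(\mathbb{D})=\{f=\sum_{k\ge0}c_kz^k:\ \sum_{k\ge0}|(1+k^\sigma)c_k|^2<\infty\}$ with $\|f\|_{H^2_\sigma}=\left(\sum_{k\ge0}|(1+k^\sigma)c_k|^2\right)^{1/2}$. *)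

theory Defs
  imports "HOL-Analysis.Analysis"
begin

text \<open>A holomorphic function on the disc given by its Taylor coefficients c;
  evaluated anywhere the series is summed (on the closed disc for the functions
  considered here the series converges absolutely).\<close>
definition taylor_fun :: "(nat \<Rightarrow> complex) \<Rightarrow> complex \<Rightarrow> complex" where
  "taylor_fun c z = (\<Sum>k. c k * z ^ k)"

definition hardy_inner :: "(complex \<Rightarrow> complex) \<Rightarrow> (complex \<Rightarrow> complex) \<Rightarrow> complex" where
  "hardy_inner f g = integral {0..2*pi} (\<lambda>t. f (cis t) * cnj (g (cis t))) / (2 * of_real pi)"

definition hardy_norm :: "(complex \<Rightarrow> complex) \<Rightarrow> real" where
  "hardy_norm f = sqrt (Re (hardy_inner f f))"

definition in_H2_sigma :: "nat \<Rightarrow> (nat \<Rightarrow> complex) \<Rightarrow> bool" where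
  "in_H2_sigma \<sigma> c \<longleftrightarrow> summable (\<lambda>k. (cmod ((1 + of_nat k ^ \<sigma>) * c k))\<^sup>2)"

definition H2_sigma_norm :: "nat \<Rightarrow> (nat \<Rightarrow> complex) \<Rightarrow> real" where
  "H2_sigma_norm \<sigma> c = sqrt (\<Sum>k. (cmod ((1 + of_nat k ^ \<sigma>) * c k))\<^sup>2)"

definition laguerre :: "complex \<Rightarrow> nat \<Rightarrow> complex \<Rightarrow> complex" where
  "laguerre a l z = of_real (sqrt (1 - (cmod a)\<^sup>2)) / (1 - cnj a * z)
      * ((z - a) / (1 - cnj a * z)) ^ (l - 1)"

end

theory Submission
  imports Defs "HOL-Complex_Analysis.Complex_Analysis"
begin

(* Let phi(w) = (w + a) / (1 + cnj a * w) and g(w) = sqrt (1 - |a|^2) / (1 + cnj a * w).  On the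
   unit circle U P = g * (P o phi) sends B_{m+1,a} to w^m, so the Laguerre coefficients of an
   entire P are the Taylor coefficients F_m of U P, and by Parseval U is an isometry and
   ||P - S_n P||^2 = sum_{m >= n} |F_m|^2.  For m >= n the weight n^(2 sigma) is at most
   (2 sigma)^(2 sigma) + 4^sigma (m! / (m - sigma)!)^2, and
   sum_m (m! / (m - sigma)!)^2 |F_m|^2 = ||(U P)^(sigma)||^2.  By the Leibniz and chain rules
   (U P)^(sigma) = sum_{j <= sigma} h_j * (P^(j) o phi) with h_j independent of P; since |g| is
   bounded below on the circle and U is an isometry, ||(U P)^(sigma)||^2 is bounded by a constant
   times sum_{j <= sigma} ||P^(j)||^2 <= (sigma + 1) ||P||_{H^2_sigma}^2.  This proves the estimate
   for polynomials.  A function in H^2_sigma has absolutely summable Taylor coefficients, so its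
   Taylor polynomials converge uniformly on the circle and the estimate passes to the limit. *)

section \<open>The unit circle and the Blaschke factor\<close>

lemma mobius_denom_nonzero:
  fixes a z :: complex
  assumes "cmod a < 1" and "cmod z \<le> 1"
  shows "1 - cnj a * z \<noteq> 0"
proof
  assume "1 - cnj a * z = 0"
  then have "cmod a * cmod z = 1" by (metis complex_mod_cnj norm_mult norm_one right_minus_eq)
  moreover have "cmod a * cmod z < 1"
    using assms mult_left_le[of "cmod z" "cmod a"] by simp
  ultimately show False by simp
qed

lemma norm_mobius_denom_ge:
  fixes a z :: complex
  assumes "cmod z = 1"
  shows "1 - cmod a \<le> cmod (1 - cnj a * z)"
  using norm_triangle_ineq2[of 1 "cnj a * z"] assms by (simp add: norm_mult)

lemma norm_blaschke_factor_circle: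
  fixes a z :: complex
  assumes a: "cmod a < 1" and z: "cmod z = 1"
  shows "cmod ((z - a) / (1 - cnj a * z)) = 1"
proof -
  have "z * cnj z = 1" using complex_norm_square[of z] z by simp
  then have "1 - cnj a * z = z * cnj (z - a)" by (simp add: algebra_simps)
  then have "cmod (1 - cnj a * z) = cmod (z - a)" using z by (simp add: norm_mult flip: complex_cnj_diff)
  then show ?thesis using mobius_denom_nonzero[OF a, of z] z a by (auto simp: norm_divide)
qed

section \<open>Orthonormality of the Laguerre system\<close>

lemma has_integral_cis_circlepath:
  assumes "(f has_contour_integral I) (circlepath 0 1)"
  shows "((\<lambda>t. f (cis t) * \<i> * cis t) has_integral I) {0..2*pi}"
  using has_contour_integral_part_circlepath_iff[of 0 "2*pi" f I 0 1] assms
  by (simp add: circlepath_def)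

lemma laguerre_mult_cnj_laguerre:
  fixes a z :: complex
  assumes a: "cmod a < 1" and z: "cmod z = 1"
  shows "laguerre a (Suc (l + k)) z * cnj (laguerre a (Suc l) z)
       = (1 - (cmod a)\<^sup>2) * z * (z - a) ^ k / ((1 - cnj a * z) ^ Suc k * (z - a))"
proof -
  define s where "s = sqrt (1 - (cmod a)\<^sup>2)"
  define D where "D = 1 - cnj a * z"
  define b where "b = (z - a) / D"
  have D: "D \<noteq> 0" unfolding D_def using mobius_denom_nonzero[OF a] z by simp
  have za: "z - a \<noteq> 0" and z0: "z \<noteq> 0" using a z by auto
  have bb: "b * cnj b = 1" using norm_blaschke_factor_circle[OF a z] complex_norm_square[of b]
    unfolding b_def D_def by simp
  have ss: "of_real s * of_real s = (1 - (cmod a)\<^sup>2 :: complex)"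
    unfolding s_def using a by (simp flip: of_real_mult add: abs_square_le_1 less_imp_le)
  have cnjD: "cnj D = (z - a) / z"
    using complex_norm_square[of z] z z0 unfolding D_def by (simp add: field_simps)
  have L: "laguerre a (Suc m) z = of_real s / D * b ^ m" for m
    unfolding laguerre_def s_def D_def b_def by simp
  have "laguerre a (Suc (l + k)) z * cnj (laguerre a (Suc l) z)
      = (of_real s * of_real s) / (D * cnj D) * (b ^ k * (b * cnj b) ^ l)"
    unfolding L by (simp add: power_add power_mult_distrib)
  also have "\<dots> = (of_real s * of_real s) / (D * cnj D) * b ^ k"
    unfolding bb by simp
  also have "\<dots> = (1 - (cmod a)\<^sup>2) * z * (z - a) ^ k / (D ^ Suc k * (z - a))"
    unfolding ss cnjD b_def power_divide using D za z0 by (simp add: field_simps)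
  finally show ?thesis unfolding D_def .
qed

lemma laguerre_kernel_contour_integral:
  fixes a :: complex
  assumes a: "cmod a < 1"
  shows "((\<lambda>z. of_real (1 - (cmod a)\<^sup>2) / (\<i> * (1 - cnj a * z) ^ Suc k) * (z - a) ^ k / (z - a))
           has_contour_integral (if k = 0 then 2 * pi else 0)) (circlepath 0 1)"
proof -
  define X :: complex where "X = of_real (1 - (cmod a)\<^sup>2)"
  define G where "G j z = X / (\<i> * (1 - cnj a * z) ^ Suc k) * (z - a) ^ j" for j z
  have cont: "continuous_on (cball 0 1) (G j)" and hol: "G j holomorphic_on ball 0 1" for j
    unfolding G_def using mobius_denom_nonzero[OF a]
    by (auto intro!: continuous_intros holomorphic_intros)
  have "((\<lambda>z. G k z / (z - a)) has_contour_integral (if k = 0 then 2 * pi else 0)) (circlepath 0 1)"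
  proof (cases "k = 0")
    case True
    have "1 - (cmod a)\<^sup>2 \<noteq> 0" using a by (simp add: abs_square_eq_1)
    then have X0: "X \<noteq> 0" unfolding X_def of_real_eq_0_iff .
    have "1 - cnj a * a = X"
      using complex_norm_square[of a] by (simp add: X_def mult.commute)
    then have "G 0 a = 1 / \<i>" unfolding G_def using True X0 by simp
    moreover have "((\<lambda>z. G 0 z / (z - a)) has_contour_integral (2 * of_real pi * \<i> * G 0 a))
        (circlepath 0 1)"
      using a by (intro Cauchy_integral_circlepath[OF cont hol]) auto
    ultimately show ?thesis using True by (simp add: mult.assoc)
  next
    case False
    \<comment> \<open>for \<open>k > 0\<close> the pole at \<open>a\<close> cancels\<close>
    have "(G (k - 1) has_contour_integral 0) (circlepath 0 1)"
      by (rule Cauchy_theorem_disc[where K = "{}" and a = 0 and e = 1, OF _ cont])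
         (auto intro!: holomorphic_on_imp_differentiable_at[OF hol])
    then have "((\<lambda>z. G k z / (z - a)) has_contour_integral 0) (circlepath 0 1)"
    proof (rule has_contour_integral_eq)
      fix z assume "z \<in> path_image (circlepath 0 1)"
      then have "z - a \<noteq> 0" using a by auto
      moreover have "(z - a) ^ k = (z - a) ^ (k - 1) * (z - a)"
        using False by (metis power_minus_mult zero_less_iff_neq_zero)
      ultimately show "G (k - 1) z = G k z / (z - a)" unfolding G_def by simp
    qed
    then show ?thesis using False by simp
  qed
  then show ?thesis unfolding G_def X_def .
qed

lemma laguerre_orthonormal_integral:
  fixes a :: complex
  assumes a: "cmod a < 1"
  shows "((\<lambda>t. laguerre a (Suc (l + k)) (cis t) * cnj (laguerre a (Suc l) (cis t)))
           has_integral (if k = 0 then 2 * pi else 0)) {0..2*pi}"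
  using has_integral_cis_circlepath[OF laguerre_kernel_contour_integral[OF a, of k]]
proof (rule has_integral_eq[rotated])
  fix t
  define D where "D = 1 - cnj a * cis t"
  have "D \<noteq> 0" "cis t - a \<noteq> 0" unfolding D_def using mobius_denom_nonzero[OF a] a by auto
  then show "of_real (1 - (cmod a)\<^sup>2) / (\<i> * (1 - cnj a * cis t) ^ Suc k) * (cis t - a) ^ k
        / (cis t - a) * \<i> * cis t
      = laguerre a (Suc (l + k)) (cis t) * cnj (laguerre a (Suc l) (cis t))"
    unfolding laguerre_mult_cnj_laguerre[OF a norm_cis] D_def[symmetric] by (simp add: field_simps)
qed

lemma hardy_inner_cnj_swap: "hardy_inner g f = cnj (hardy_inner f g)"
  unfolding hardy_inner_def by (simp add: integral_cnj mult.commute)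

lemma hardy_inner_laguerre:
  assumes a: "cmod a < 1"
  shows "hardy_inner (laguerre a (Suc m)) (laguerre a (Suc l)) = (if m = l then 1 else 0)"
proof -
  have *: "hardy_inner (laguerre a (Suc m)) (laguerre a (Suc l)) = (if m = l then 1 else 0)"
    if "l \<le> m" for m l
  proof -
    obtain k where k: "m = l + k" using \<open>l \<le> m\<close> le_Suc_ex by blast
    from laguerre_orthonormal_integral[OF a, of l k] show ?thesis
      unfolding hardy_inner_def k by (simp add: integral_unique)
  qed
  show ?thesis
    using *[of l m] *[of m l] hardy_inner_cnj_swap[of "laguerre a (Suc m)"] by (cases "l \<le> m") auto
qed

lemma norm_laguerre_circle_le:
  fixes a z :: complex
  assumes a: "cmod a < 1" and z: "cmod z = 1"
  shows "cmod (laguerre a (Suc m) z) \<le> sqrt (1 - (cmod a)\<^sup>2) / (1 - cmod a)"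
proof -
  have s: "sqrt (1 - (cmod a)\<^sup>2) \<ge> 0" using a by (simp add: abs_square_le_1 less_imp_le)
  have "cmod (laguerre a (Suc m) z) = sqrt (1 - (cmod a)\<^sup>2) / cmod (1 - cnj a * z)"
    using norm_blaschke_factor_circle[OF a z] s
    by (simp add: laguerre_def norm_mult norm_divide norm_power)
  also have "\<dots> \<le> sqrt (1 - (cmod a)\<^sup>2) / (1 - cmod a)"
    using norm_mobius_denom_ge[OF z, of a] a s by (intro divide_left_mono) (auto intro!: mult_pos_pos)
  finally show ?thesis .
qed

lemma continuous_on_laguerre_cis:
  assumes "cmod a < 1"
  shows "continuous_on UNIV (\<lambda>t. laguerre a m (cis t))"
  unfolding laguerre_def using mobius_denom_nonzero[OF assms]
  by (auto intro!: continuous_intros)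

section \<open>Uniform limits and the Hardy inner product\<close>

lemma hardy_norm_square_integral:
  assumes f: "continuous_on UNIV (\<lambda>t. f (cis t))"
  shows "((\<lambda>t. (cmod (f (cis t)))\<^sup>2) has_integral 2 * pi * (hardy_norm f)\<^sup>2) {0..2*pi}"
    and "hardy_inner f f = of_real ((hardy_norm f)\<^sup>2)"
    and "hardy_norm f \<ge> 0"
proof -
  have "continuous_on {0..2*pi} (\<lambda>t. (cmod (f (cis t)))\<^sup>2)"
    by (intro continuous_intros continuous_on_subset[OF f]) auto
  then obtain I where I: "((\<lambda>t. (cmod (f (cis t)))\<^sup>2) has_integral I) {0..2*pi}"
    using integrable_continuous_interval by blast
  have I0: "I \<ge> 0" by (rule has_integral_nonneg[OF I]) simp
  have "((\<lambda>t. f (cis t) * cnj (f (cis t))) has_integral of_real I) {0..2*pi}"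
    using has_integral_of_real[OF I, where 'b = complex] unfolding complex_norm_square .
  then have inner: "hardy_inner f f = of_real (I / (2 * pi))"
    unfolding hardy_inner_def by (simp add: integral_unique)
  then have norm: "(hardy_norm f)\<^sup>2 = I / (2 * pi)"
    unfolding hardy_norm_def using I0 by simp
  show "((\<lambda>t. (cmod (f (cis t)))\<^sup>2) has_integral 2 * pi * (hardy_norm f)\<^sup>2) {0..2*pi}"
    using I by (simp add: norm)
  show "hardy_inner f f = of_real ((hardy_norm f)\<^sup>2)" by (simp add: inner norm)
  show "hardy_norm f \<ge> 0" unfolding hardy_norm_def inner using I0 by simp
qed

lemma hardy_inner_sum_left:
  assumes I: "finite I" and f: "\<And>i. i \<in> I \<Longrightarrow> continuous_on UNIV (\<lambda>t. f i (cis t))"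
    and h: "continuous_on UNIV (\<lambda>t. h (cis t))"
  shows "hardy_inner (\<lambda>z. \<Sum>i\<in>I. c i * f i z) h = (\<Sum>i\<in>I. c i * hardy_inner (f i) h)"
proof -
  have int: "(\<lambda>t. c i * (f i (cis t) * cnj (h (cis t)))) integrable_on {0..2*pi}" if "i \<in> I" for i
    by (intro integrable_continuous_interval continuous_intros
        continuous_on_subset[OF f[OF that]] continuous_on_subset[OF h]) auto
  have "integral {0..2*pi} (\<lambda>t. (\<Sum>i\<in>I. c i * f i (cis t)) * cnj (h (cis t)))
      = integral {0..2*pi} (\<lambda>t. \<Sum>i\<in>I. c i * (f i (cis t) * cnj (h (cis t))))"
    by (simp add: sum_distrib_right mult.assoc)
  also have "\<dots> = (\<Sum>i\<in>I. c i * integral {0..2*pi} (\<lambda>t. f i (cis t) * cnj (h (cis t))))"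
    using integral_sum[OF I int] by simp
  finally show ?thesis
    unfolding hardy_inner_def by (simp add: sum_divide_distrib)
qed

lemma uniform_limit_tendsto_mult:
  fixes s :: "nat \<Rightarrow> 'a::real_normed_algebra"
  assumes s: "s \<longlonglongrightarrow> s0" and f: "bounded (f ` S)"
  shows "uniform_limit S (\<lambda>N t. s N * f t) (\<lambda>t. s0 * f t) sequentially"
proof (rule uniform_lim_mult[OF _ uniform_limit_const _ f])
  show "uniform_limit S (\<lambda>N t. s N) (\<lambda>t. s0) sequentially"
  proof (rule uniform_limitI)
    fix e :: real assume "e > 0"
    from tendstoD[OF s this] show "\<forall>\<^sub>F N in sequentially. \<forall>t\<in>S. dist (s N) s0 < e"
      by eventually_elim simp
  qed
  show "bounded ((\<lambda>t. s0) ` S)" by (rule bounded_subset[of "{s0}"]) auto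
qed

lemma uniform_limit_sum:
  fixes f :: "'i \<Rightarrow> 'n \<Rightarrow> 'x \<Rightarrow> 'c::real_normed_vector"
  assumes "finite I" and "\<And>i. i \<in> I \<Longrightarrow> uniform_limit S (f i) (g i) F"
  shows "uniform_limit S (\<lambda>N t. \<Sum>i\<in>I. f i N t) (\<lambda>t. \<Sum>i\<in>I. g i t) F"
  using assms
proof (induction I rule: finite_induct)
  case (insert i I)
  then have "uniform_limit S (\<lambda>N t. f i N t + (\<Sum>i\<in>I. f i N t)) (\<lambda>t. g i t + (\<Sum>i\<in>I. g i t)) F"
    by (intro uniform_limit_add) auto
  with insert show ?case by simp
qed (simp add: uniform_limit_const)

lemma hardy_inner_tendsto_uniform:
  assumes f: "uniform_limit {0..2*pi} (\<lambda>N t. f N (cis t)) (\<lambda>t. f0 (cis t)) sequentially"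
    and g: "uniform_limit {0..2*pi} (\<lambda>N t. g N (cis t)) (\<lambda>t. g0 (cis t)) sequentially"
    and cf: "\<And>N. continuous_on UNIV (\<lambda>t. f N (cis t))"
    and cg: "\<And>N. continuous_on UNIV (\<lambda>t. g N (cis t))"
  shows "(\<lambda>N. hardy_inner (f N) (g N)) \<longlonglongrightarrow> hardy_inner f0 g0"
proof -
  have bounded: "bounded (l ` {0..2*pi})"
    if lim: "uniform_limit {0..2*pi} L l sequentially" and cont: "\<And>N. continuous_on UNIV (L N)"
    for L and l :: "real \<Rightarrow> complex"
  proof -
    have "continuous_on {0..2*pi} l"
      by (rule uniform_limit_theorem[OF _ lim]) (simp_all add: continuous_on_subset[OF cont])
    then show ?thesis by (intro compact_imp_bounded compact_continuous_image compact_Icc)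
  qed
  have lim: "uniform_limit {0..2*pi} (\<lambda>N t. f N (cis t) * cnj (g N (cis t)))
      (\<lambda>t. f0 (cis t) * cnj (g0 (cis t))) sequentially"
  proof (rule uniform_lim_mult[OF f])
    show "uniform_limit {0..2*pi} (\<lambda>N t. cnj (g N (cis t))) (\<lambda>t. cnj (g0 (cis t))) sequentially"
      by (rule bounded_linear.uniform_limit[OF bounded_linear_cnj g])
    show "bounded ((\<lambda>t. f0 (cis t)) ` {0..2*pi})" by (rule bounded[OF f cf])
    have "bounded ((\<lambda>t. g0 (cis t)) ` {0..2*pi})" by (rule bounded[OF g cg])
    then show "bounded ((\<lambda>t. cnj (g0 (cis t))) ` {0..2*pi})"
      by (simp add: bounded_iff image_image)
  qed
  have cont: "continuous_on {0..2*pi} (\<lambda>t. f N (cis t) * cnj (g N (cis t)))" for N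
    by (intro continuous_intros continuous_on_subset[OF cf] continuous_on_subset[OF cg]) auto
  obtain I J
    where I: "\<And>N. ((\<lambda>t. f N (cis t) * cnj (g N (cis t))) has_integral I N) {0..2*pi}"
      and J: "((\<lambda>t. f0 (cis t) * cnj (g0 (cis t))) has_integral J) {0..2*pi}"
      and "I \<longlonglongrightarrow> J"
    using uniform_limit_integral[OF lim cont] by auto
  moreover have "hardy_inner (f N) (g N) = I N / (2 * of_real pi)" for N
    unfolding hardy_inner_def using I[of N] by (simp add: integral_unique)
  moreover have "hardy_inner f0 g0 = J / (2 * of_real pi)"
    unfolding hardy_inner_def using J by (simp add: integral_unique)
  ultimately show ?thesis by (auto intro: tendsto_divide)
qed

lemma continuous_on_cis_holomorphic:
  assumes "f holomorphic_on ball 0 R" and "R > 1"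
  shows "continuous_on UNIV (\<lambda>t. f (cis t))"
  using assms
  by (intro continuous_on_compose2[OF holomorphic_on_imp_continuous_on[OF assms(1)]] continuous_intros)
     auto

section \<open>Expansions in the Laguerre system\<close>

definition has_laguerre_expansion ::
    "complex \<Rightarrow> (nat \<Rightarrow> complex) \<Rightarrow> (complex \<Rightarrow> complex) \<Rightarrow> bool" where
  "has_laguerre_expansion a G S \<longleftrightarrow> summable (\<lambda>m. cmod (G m)) \<and>
     (\<forall>t. (\<lambda>m. G m * laguerre a (Suc m) (cis t)) sums S (cis t))"

lemma laguerre_expansion_uniform_limit:
  assumes a: "cmod a < 1" and S: "has_laguerre_expansion a G S"
  shows "uniform_limit UNIV (\<lambda>N t. \<Sum>m<N. G m * laguerre a (Suc m) (cis t))
           (\<lambda>t. S (cis t)) sequentially"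
proof -
  define M where "M = sqrt (1 - (cmod a)\<^sup>2) / (1 - cmod a)"
  have "uniform_limit UNIV (\<lambda>N t. \<Sum>m<N. G m * laguerre a (Suc m) (cis t))
      (\<lambda>t. \<Sum>m. G m * laguerre a (Suc m) (cis t)) sequentially"
  proof (rule Weierstrass_m_test)
    show "norm (G m * laguerre a (Suc m) (cis t)) \<le> cmod (G m) * M" for m t
      unfolding norm_mult M_def
      by (intro mult_left_mono norm_laguerre_circle_le[OF a]) simp_all
    show "summable (\<lambda>m. cmod (G m) * M)"
      using S unfolding has_laguerre_expansion_def by (intro summable_mult2) simp
  qed
  moreover have "(\<Sum>m. G m * laguerre a (Suc m) (cis t)) = S (cis t)" for t
    using S unfolding has_laguerre_expansion_def by (simp add: sums_iff)
  ultimately show ?thesis by simp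
qed

lemma laguerre_expansion_continuous:
  assumes a: "cmod a < 1" and S: "has_laguerre_expansion a G S"
  shows "continuous_on UNIV (\<lambda>t. S (cis t))"
  by (rule uniform_limit_theorem[OF _ laguerre_expansion_uniform_limit[OF a S]])
     (auto intro!: always_eventually continuous_intros continuous_on_laguerre_cis[OF a])

lemma laguerre_expansion_hardy_inner:
  assumes a: "cmod a < 1" and S: "has_laguerre_expansion a G S"
    and h: "continuous_on UNIV (\<lambda>t. h (cis t))"
  shows "(\<lambda>m. G m * hardy_inner (laguerre a (Suc m)) h) sums hardy_inner S h"
proof -
  have "(\<lambda>N. hardy_inner (\<lambda>z. \<Sum>m<N. G m * laguerre a (Suc m) z) h) \<longlonglongrightarrow> hardy_inner S h"
    by (rule hardy_inner_tendsto_uniform[where g = "\<lambda>_. h"])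
       (auto intro!: uniform_limit_on_subset[OF laguerre_expansion_uniform_limit[OF a S]]
         uniform_limit_const continuous_intros continuous_on_laguerre_cis[OF a] h)
  moreover have "hardy_inner (\<lambda>z. \<Sum>m<N. G m * laguerre a (Suc m) z) h
      = (\<Sum>m<N. G m * hardy_inner (laguerre a (Suc m)) h)" for N
    by (rule hardy_inner_sum_left[OF _ continuous_on_laguerre_cis[OF a] h]) simp
  ultimately show ?thesis unfolding sums_def by simp
qed

lemma laguerre_expansion_coeff:
  assumes a: "cmod a < 1" and S: "has_laguerre_expansion a G S"
  shows "hardy_inner S (laguerre a (Suc l)) = G l"
proof -
  have "(\<lambda>m. G m * hardy_inner (laguerre a (Suc m)) (laguerre a (Suc l)))
      sums hardy_inner S (laguerre a (Suc l))"
    by (rule laguerre_expansion_hardy_inner[OF a S continuous_on_laguerre_cis[OF a]])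
  moreover have "(\<lambda>m. G m * hardy_inner (laguerre a (Suc m)) (laguerre a (Suc l)))
      = (\<lambda>m. if m = l then G l else 0)"
    by (simp add: hardy_inner_laguerre[OF a] fun_eq_iff)
  ultimately show ?thesis using sums_single[of l "\<lambda>_. G l"] sums_unique2 by simp
qed

lemma laguerre_expansion_parseval:
  assumes a: "cmod a < 1" and S: "has_laguerre_expansion a G S"
  shows "(\<lambda>m. (cmod (G m))\<^sup>2) sums (hardy_norm S)\<^sup>2"
proof -
  note cont = laguerre_expansion_continuous[OF a S]
  have "G m * hardy_inner (laguerre a (Suc m)) S = of_real ((cmod (G m))\<^sup>2)" for m
    unfolding hardy_inner_cnj_swap[of "laguerre a (Suc m)" S] laguerre_expansion_coeff[OF a S]
    by (rule complex_norm_square[symmetric])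
  then have "(\<lambda>m. of_real ((cmod (G m))\<^sup>2)) sums (of_real ((hardy_norm S)\<^sup>2) :: complex)"
    using laguerre_expansion_hardy_inner[OF a S cont] hardy_norm_square_integral(2)[OF cont]
    by simp
  then show ?thesis by (simp only: sums_of_real_iff)
qed

definition laguerre_remainder ::
    "complex \<Rightarrow> nat \<Rightarrow> (complex \<Rightarrow> complex) \<Rightarrow> complex \<Rightarrow> complex" where
  "laguerre_remainder a n f = (\<lambda>z. f z - (\<Sum>l=1..n. hardy_inner f (laguerre a l) * laguerre a l z))"

lemma laguerre_expansion_remainder:
  assumes a: "cmod a < 1" and S: "has_laguerre_expansion a G S"
  shows "has_laguerre_expansion a (\<lambda>m. if m < n then 0 else G m) (laguerre_remainder a n S)"
  unfolding has_laguerre_expansion_def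
proof
  show "summable (\<lambda>m. cmod (if m < n then 0 else G m))"
    using S unfolding has_laguerre_expansion_def
    by (rule summable_comparison_test[rotated, OF conjunct1]) auto
  show "\<forall>t. (\<lambda>m. (if m < n then 0 else G m) * laguerre a (Suc m) (cis t))
          sums laguerre_remainder a n S (cis t)"
  proof
    fix t
    have partial: "(\<Sum>l=1..n. hardy_inner S (laguerre a l) * laguerre a l z)
        = (\<Sum>m<n. G m * laguerre a (Suc m) z)" for z
      by (simp add: sum.atLeast1_atMost_eq laguerre_expansion_coeff[OF a S])
    have "(\<lambda>m. G m * laguerre a (Suc m) (cis t)
             - (if m \<in> {..<n} then G m * laguerre a (Suc m) (cis t) else 0))
        sums (S (cis t) - (\<Sum>m<n. G m * laguerre a (Suc m) (cis t)))"
      using S unfolding has_laguerre_expansion_def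
      by (intro sums_diff sums_If_finite_set) auto
    moreover have "(\<lambda>m. G m * laguerre a (Suc m) (cis t)
             - (if m \<in> {..<n} then G m * laguerre a (Suc m) (cis t) else 0))
        = (\<lambda>m. (if m < n then 0 else G m) * laguerre a (Suc m) (cis t))"
      by auto
    ultimately show "(\<lambda>m. (if m < n then 0 else G m) * laguerre a (Suc m) (cis t))
        sums laguerre_remainder a n S (cis t)"
      unfolding laguerre_remainder_def partial by (simp only:)
  qed
qed

lemma laguerre_0_Suc: "laguerre 0 (Suc m) z = z ^ m"
  by (simp add: laguerre_def)

definition taylor_coeff :: "(complex \<Rightarrow> complex) \<Rightarrow> nat \<Rightarrow> complex" where
  "taylor_coeff F m = (deriv ^^ m) F 0 / fact m"

lemma has_laguerre_expansion_taylor: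
  assumes F: "F holomorphic_on ball 0 R" and R: "R > 1"
  shows "has_laguerre_expansion 0 (taylor_coeff F) F"
  unfolding has_laguerre_expansion_def laguerre_0_Suc
proof
  define r :: complex where "r = of_real ((1 + R) / 2)"
  have "norm r = (1 + R) / 2" unfolding r_def norm_of_real using R by simp
  then have r: "r \<in> ball 0 R" and "norm (1::complex) < norm r"
    using R by simp_all
  moreover have "summable (\<lambda>m. taylor_coeff F m * r ^ m)"
    using holomorphic_power_series[OF F r] by (auto simp: sums_iff taylor_coeff_def)
  ultimately have "summable (\<lambda>m. norm (taylor_coeff F m * 1 ^ m))"
    by (intro powser_insidea) auto
  then show "summable (\<lambda>m. cmod (taylor_coeff F m))" by simp
  show "\<forall>t. (\<lambda>m. taylor_coeff F m * cis t ^ m) sums F (cis t)"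
    using holomorphic_power_series[OF F] R by (simp add: taylor_coeff_def)
qed

section \<open>Transfer of the Laguerre system to the monomials\<close>

definition disc_automorphism :: "complex \<Rightarrow> complex \<Rightarrow> complex" where
  "disc_automorphism a w = (w + a) / (1 + cnj a * w)"

definition transfer_weight :: "complex \<Rightarrow> complex \<Rightarrow> complex" where
  "transfer_weight a w = of_real (sqrt (1 - (cmod a)\<^sup>2)) / (1 + cnj a * w)"

definition laguerre_transfer :: "complex \<Rightarrow> (complex \<Rightarrow> complex) \<Rightarrow> complex \<Rightarrow> complex" where
  "laguerre_transfer a P = (\<lambda>w. transfer_weight a w * P (disc_automorphism a w))"

text \<open>The denominators \<open>1 + cnj a * w\<close> vanish only on the circle \<open>|w| = 1 / |a|\<close>, so any
  radius in \<open>(1, 1 / |a|)\<close> would do.\<close>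

definition transfer_radius :: "complex \<Rightarrow> real" where
  "transfer_radius a = (if a = 0 then 2 else 1 / cmod a)"

lemma transfer_radius_gt_1: "cmod a < 1 \<Longrightarrow> transfer_radius a > 1"
  unfolding transfer_radius_def by (auto simp: field_simps)

lemma transfer_denom_nonzero:
  assumes a: "cmod a < 1" and w: "w \<in> ball 0 (transfer_radius a)"
  shows "1 + cnj a * w \<noteq> 0"
proof (cases "a = 0")
  case False
  then have "cmod (cnj a * w) < 1"
    using w by (simp add: transfer_radius_def norm_mult field_simps)
  then show ?thesis by (metis add_eq_0_iff norm_minus_cancel norm_one less_irrefl)
qed simp

lemma holomorphic_transfer_weight:
  "cmod a < 1 \<Longrightarrow> transfer_weight a holomorphic_on ball 0 (transfer_radius a)"
  unfolding transfer_weight_def by (intro holomorphic_intros) (use transfer_denom_nonzero in auto)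

lemma holomorphic_disc_automorphism:
  "cmod a < 1 \<Longrightarrow> disc_automorphism a holomorphic_on ball 0 (transfer_radius a)"
  unfolding disc_automorphism_def by (intro holomorphic_intros) (use transfer_denom_nonzero in auto)

lemma holomorphic_laguerre_transfer:
  assumes a: "cmod a < 1" and P: "P holomorphic_on UNIV"
  shows "laguerre_transfer a P holomorphic_on ball 0 (transfer_radius a)"
proof -
  have "(P \<circ> disc_automorphism a) holomorphic_on ball 0 (transfer_radius a)"
    by (rule holomorphic_on_compose[OF holomorphic_disc_automorphism[OF a]])
       (rule holomorphic_on_subset[OF P], simp)
  then show ?thesis
    unfolding laguerre_transfer_def
    by (intro holomorphic_intros holomorphic_transfer_weight[OF a]) (simp add: o_def)
qed

lemma laguerre_transfer_blaschke:
  assumes a: "cmod a < 1" and z: "cmod z = 1"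
  shows "of_real (sqrt (1 - (cmod a)\<^sup>2)) / (1 - cnj a * z)
           * laguerre_transfer a P ((z - a) / (1 - cnj a * z)) = P z"
proof -
  define s :: complex where "s = of_real (sqrt (1 - (cmod a)\<^sup>2))"
  define D where "D = 1 - cnj a * z"
  define X where "X = 1 - cnj a * a"
  have D: "D \<noteq> 0" unfolding D_def using mobius_denom_nonzero[OF a] z by simp
  have X: "X \<noteq> 0" unfolding X_def using mobius_denom_nonzero[OF a less_imp_le[OF a]] .
  have ss: "s * s = X"
    unfolding s_def X_def using a complex_norm_square[of a]
    by (simp flip: of_real_mult add: abs_square_le_1 less_imp_le mult.commute)
  have denom: "1 + cnj a * ((z - a) / D) = X / D"
    using D unfolding X_def by (simp add: field_simps D_def)
  have num: "(z - a) / D + a = z * X / D"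
    using D unfolding X_def by (simp add: field_simps D_def)
  have "s / D * laguerre_transfer a P ((z - a) / D) = (s * s) / X * P (z * X / D / (X / D))"
    unfolding laguerre_transfer_def transfer_weight_def disc_automorphism_def denom num
      s_def[symmetric]
    using D X by (simp add: field_simps)
  also have "\<dots> = P z" using D X ss by simp
  finally show ?thesis unfolding s_def D_def .
qed

lemma has_laguerre_expansion_transfer:
  assumes a: "cmod a < 1" and P: "P holomorphic_on UNIV"
  shows "has_laguerre_expansion a (taylor_coeff (laguerre_transfer a P)) P"
proof -
  define F where "F = laguerre_transfer a P"
  have F: "F holomorphic_on ball 0 (transfer_radius a)"
    unfolding F_def by (rule holomorphic_laguerre_transfer[OF a P])
  note R = transfer_radius_gt_1[OF a]
  have "summable (\<lambda>m. cmod (taylor_coeff F m))"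
    using has_laguerre_expansion_taylor[OF F R] unfolding has_laguerre_expansion_def by simp
  moreover have "(\<lambda>m. taylor_coeff F m * laguerre a (Suc m) z) sums P z" if z: "cmod z = 1" for z
  proof -
    define b where "b = (z - a) / (1 - cnj a * z)"
    define k where "k = of_real (sqrt (1 - (cmod a)\<^sup>2)) / (1 - cnj a * z)"
    have "b \<in> ball 0 (transfer_radius a)"
      using norm_blaschke_factor_circle[OF a z] R unfolding b_def by simp
    then have "(\<lambda>m. k * (taylor_coeff F m * b ^ m)) sums (k * F b)"
      using holomorphic_power_series[OF F] by (intro sums_mult) (simp add: taylor_coeff_def)
    moreover have "k * F b = P z"
      unfolding k_def b_def F_def by (rule laguerre_transfer_blaschke[OF a z])
    ultimately show ?thesis
      unfolding laguerre_def k_def b_def by (simp add: mult_ac)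
  qed
  ultimately show ?thesis unfolding has_laguerre_expansion_def F_def by simp
qed

lemma hardy_norm_laguerre_transfer:
  assumes a: "cmod a < 1" and P: "P holomorphic_on UNIV"
  shows "hardy_norm (laguerre_transfer a P) = hardy_norm P"
proof -
  note expand_P = has_laguerre_expansion_transfer[OF a P]
  note expand_F = has_laguerre_expansion_taylor[OF holomorphic_laguerre_transfer[OF a P]
      transfer_radius_gt_1[OF a]]
  have "(hardy_norm (laguerre_transfer a P))\<^sup>2 = (hardy_norm P)\<^sup>2"
    using laguerre_expansion_parseval[OF _ expand_F] laguerre_expansion_parseval[OF a expand_P]
    by (simp add: sums_unique2)
  moreover have "hardy_norm P \<ge> 0" "hardy_norm (laguerre_transfer a P) \<ge> 0"
    using laguerre_expansion_continuous[OF a expand_P] laguerre_expansion_continuous[OF _ expand_F]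
    by (simp_all add: hardy_norm_square_integral(3))
  ultimately show ?thesis by (simp add: power2_eq_iff_nonneg)
qed

lemma norm_transfer_weight_ge:
  assumes a: "cmod a < 1" and w: "cmod w = 1"
  shows "sqrt (1 - (cmod a)\<^sup>2) / (1 + cmod a) \<le> cmod (transfer_weight a w)"
proof -
  have s: "sqrt (1 - (cmod a)\<^sup>2) > 0" using a by (simp add: abs_square_less_1)
  have "1 + cnj a * w \<noteq> 0"
    using transfer_denom_nonzero[OF a] transfer_radius_gt_1[OF a] w by simp
  moreover have "cmod (1 + cnj a * w) \<le> 1 + cmod a"
    using norm_triangle_ineq[of 1 "cnj a * w"] w by (simp add: norm_mult)
  ultimately show ?thesis
    unfolding transfer_weight_def norm_divide norm_of_real abs_of_pos[OF s] using s
    by (intro divide_left_mono) (auto intro!: mult_pos_pos add_pos_nonneg)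
qed

section \<open>Derivatives of the transferred function\<close>

lemma has_field_derivative_sum_mult_compose:
  fixes h :: "nat \<Rightarrow> complex \<Rightarrow> complex" and ph P :: "complex \<Rightarrow> complex"
  assumes S: "open S" "w \<in> S" and h: "\<And>j. h j holomorphic_on S"
    and ph: "ph holomorphic_on S" and P: "P holomorphic_on UNIV"
  shows "((\<lambda>w. \<Sum>j\<le>n. h j w * (deriv ^^ j) P (ph w)) has_field_derivative
           (\<Sum>j\<le>n. deriv (h j) w * (deriv ^^ j) P (ph w)
                     + h j w * deriv ph w * (deriv ^^ Suc j) P (ph w))) (at w)"
proof (rule DERIV_sum)
  fix j
  have "((deriv ^^ j) P has_field_derivative (deriv ^^ Suc j) P (ph w)) (at (ph w))"
    using has_field_derivative_higher_deriv[OF P open_UNIV] by simp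
  from DERIV_mult[OF holomorphic_derivI[OF h S(1,2)] DERIV_chain2[OF this holomorphic_derivI[OF ph S]]]
  show "((\<lambda>w. h j w * (deriv ^^ j) P (ph w)) has_field_derivative
      deriv (h j) w * (deriv ^^ j) P (ph w) + h j w * deriv ph w * (deriv ^^ Suc j) P (ph w)) (at w)"
    by (simp add: mult_ac)
qed

lemma higher_deriv_mult_compose:
  fixes g ph :: "complex \<Rightarrow> complex"
  assumes S: "open S" and g: "g holomorphic_on S" and ph: "ph holomorphic_on S"
  shows "\<exists>h::nat \<Rightarrow> complex \<Rightarrow> complex. (\<forall>j. h j holomorphic_on S) \<and>
     (\<forall>P. P holomorphic_on UNIV \<longrightarrow>
        (\<forall>w\<in>S. (deriv ^^ n) (\<lambda>w. g w * P (ph w)) w = (\<Sum>j\<le>n. h j w * (deriv ^^ j) P (ph w))))"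
proof (induction n)
  case 0
  show ?case by (rule exI[of _ "\<lambda>j. if j = 0 then g else (\<lambda>_. 0)"]) (auto simp: g)
next
  case (Suc n)
  then obtain h where h: "\<And>j. h j holomorphic_on S"
    and IH: "\<And>P w. P holomorphic_on UNIV \<Longrightarrow> w \<in> S \<Longrightarrow>
        (deriv ^^ n) (\<lambda>w. g w * P (ph w)) w = (\<Sum>j\<le>n. h j w * (deriv ^^ j) P (ph w))"
    by blast
  define h' where "h' j w = (if j \<le> n then deriv (h j) w else 0)
      + (if j = 0 then 0 else h (j - 1) w * deriv ph w)" for j w
  have "h' j holomorphic_on S" for j
    unfolding h'_def using holomorphic_deriv[OF h S] holomorphic_deriv[OF ph S] h S
    by (cases "j \<le> n"; cases "j = 0") (auto intro!: holomorphic_intros)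
  moreover have "(deriv ^^ Suc n) (\<lambda>w. g w * P (ph w)) w = (\<Sum>j\<le>Suc n. h' j w * (deriv ^^ j) P (ph w))"
    if P: "P holomorphic_on UNIV" and w: "w \<in> S" for P w
  proof -
    have "(deriv ^^ Suc n) (\<lambda>w. g w * P (ph w)) w = deriv ((deriv ^^ n) (\<lambda>w. g w * P (ph w))) w"
      by simp
    also have "\<dots> = deriv (\<lambda>w. \<Sum>j\<le>n. h j w * (deriv ^^ j) P (ph w)) w"
      by (rule deriv_cong_ev)
         (use eventually_nhds_in_open[OF S w] in \<open>auto elim!: eventually_mono simp: IH[OF P]\<close>)
    also have "\<dots> = (\<Sum>j\<le>n. deriv (h j) w * (deriv ^^ j) P (ph w)
                     + h j w * deriv ph w * (deriv ^^ Suc j) P (ph w))"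
      by (rule DERIV_imp_deriv[OF has_field_derivative_sum_mult_compose[OF S w h ph P]])
    also have "\<dots> = (\<Sum>j\<le>Suc n. h' j w * (deriv ^^ j) P (ph w))"
    proof -
      have "(\<Sum>j\<le>Suc n. (if j \<le> n then deriv (h j) w else 0) * (deriv ^^ j) P (ph w))
          = (\<Sum>j\<le>n. deriv (h j) w * (deriv ^^ j) P (ph w))"
        by (simp add: sum.atMost_Suc)
      moreover have "(\<Sum>j\<le>Suc n. (if j = 0 then 0 else h (j - 1) w * deriv ph w) * (deriv ^^ j) P (ph w))
          = (\<Sum>j\<le>n. h j w * deriv ph w * (deriv ^^ Suc j) P (ph w))"
        by (subst sum.atMost_Suc_shift) simp
      ultimately show ?thesis unfolding h'_def distrib_right sum.distrib by simp
    qed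
    finally show ?thesis .
  qed
  ultimately show ?case by blast
qed

lemma norm_sum_mult_square_le:
  fixes x y :: "nat \<Rightarrow> complex"
  assumes y: "\<And>j. j \<le> n \<Longrightarrow> cmod (y j) \<le> B"
  shows "(cmod (\<Sum>j\<le>n. y j * x j))\<^sup>2 \<le> (real n + 1) * B\<^sup>2 * (\<Sum>j\<le>n. (cmod (x j))\<^sup>2)"
proof -
  have B: "B \<ge> 0" using y[of 0] norm_ge_zero order_trans by blast
  have "(cmod (\<Sum>j\<le>n. y j * x j))\<^sup>2 \<le> (\<Sum>j\<le>n. cmod (y j * x j))\<^sup>2"
    by (intro power_mono norm_sum) simp
  also have "\<dots> \<le> (\<Sum>j\<le>n. (cmod (y j * x j))\<^sup>2) * real (card {..n})"
    by (rule sum_squared_le_sum_of_squares)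
  also have "\<dots> \<le> (\<Sum>j\<le>n. B\<^sup>2 * (cmod (x j))\<^sup>2) * real (card {..n})"
    using y B unfolding norm_mult power_mult_distrib
    by (intro mult_right_mono sum_mono) (auto intro!: mult_right_mono power_mono)
  finally show ?thesis by (simp flip: sum_distrib_left add: mult_ac add.commute)
qed

lemma higher_deriv_laguerre_transfer_expansion:
  assumes a: "cmod a < 1"
  obtains h :: "nat \<Rightarrow> complex \<Rightarrow> complex" and H :: real
  where "\<And>P w. P holomorphic_on UNIV \<Longrightarrow> cmod w = 1 \<Longrightarrow>
      (deriv ^^ \<sigma>) (laguerre_transfer a P) w = (\<Sum>j\<le>\<sigma>. h j w * (deriv ^^ j) P (disc_automorphism a w))"
    and "\<And>j w. j \<le> \<sigma> \<Longrightarrow> cmod w = 1 \<Longrightarrow> cmod (h j w) \<le> H"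
proof -
  define R where "R = transfer_radius a"
  have circle: "sphere 0 1 \<subseteq> ball (0::complex) R"
    using transfer_radius_gt_1[OF a] unfolding R_def by auto
  obtain h where h: "\<And>j. h j holomorphic_on ball 0 R"
    and expand: "\<And>P w. P holomorphic_on UNIV \<Longrightarrow> w \<in> ball 0 R \<Longrightarrow>
       (deriv ^^ \<sigma>) (laguerre_transfer a P) w = (\<Sum>j\<le>\<sigma>. h j w * (deriv ^^ j) P (disc_automorphism a w))"
    using higher_deriv_mult_compose[OF open_ball holomorphic_transfer_weight[OF a]
        holomorphic_disc_automorphism[OF a], of \<sigma>]
    unfolding laguerre_transfer_def R_def by blast
  have "continuous_on (sphere 0 1) (\<lambda>w. \<Sum>j\<le>\<sigma>. cmod (h j w))"
    using h by (intro continuous_intros continuous_on_subset[OF _ circle] holomorphic_on_imp_continuous_on)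
  then have "bounded ((\<lambda>w. \<Sum>j\<le>\<sigma>. cmod (h j w)) ` sphere 0 1)"
    by (intro compact_imp_bounded compact_continuous_image compact_sphere)
  then obtain H where H: "\<And>w. w \<in> sphere 0 1 \<Longrightarrow> norm (\<Sum>j\<le>\<sigma>. cmod (h j w)) \<le> H"
    unfolding bounded_iff by blast
  show ?thesis
  proof (rule that)
    show "(deriv ^^ \<sigma>) (laguerre_transfer a P) w = (\<Sum>j\<le>\<sigma>. h j w * (deriv ^^ j) P (disc_automorphism a w))"
      if "P holomorphic_on UNIV" "cmod w = 1" for P w
      using expand that circle by auto
    show "cmod (h j w) \<le> H" if "j \<le> \<sigma>" "cmod w = 1" for j w
    proof -
      have "cmod (h j w) \<le> (\<Sum>j\<le>\<sigma>. cmod (h j w))" using that by (intro member_le_sum) auto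
      also have "\<dots> \<le> H" using H[of w] that by simp
      finally show ?thesis .
    qed
  qed
qed

lemma norm_higher_deriv_laguerre_transfer_le:
  assumes a: "cmod a < 1"
  obtains K where "K \<ge> 0" and "\<And>P w. P holomorphic_on UNIV \<Longrightarrow> cmod w = 1 \<Longrightarrow>
     (cmod ((deriv ^^ \<sigma>) (laguerre_transfer a P) w))\<^sup>2
       \<le> K * (\<Sum>j\<le>\<sigma>. (cmod (laguerre_transfer a ((deriv ^^ j) P) w))\<^sup>2)"
proof -
  obtain h H where expand: "\<And>P w. P holomorphic_on UNIV \<Longrightarrow> cmod w = 1 \<Longrightarrow>
      (deriv ^^ \<sigma>) (laguerre_transfer a P) w = (\<Sum>j\<le>\<sigma>. h j w * (deriv ^^ j) P (disc_automorphism a w))"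
    and H: "\<And>j w. j \<le> \<sigma> \<Longrightarrow> cmod w = 1 \<Longrightarrow> cmod (h j w) \<le> H"
    using higher_deriv_laguerre_transfer_expansion[OF a] by blast
  define \<mu> where "\<mu> = sqrt (1 - (cmod a)\<^sup>2) / (1 + cmod a)"
  have \<mu>: "\<mu> > 0" unfolding \<mu>_def using a by (simp add: abs_square_less_1 add_pos_nonneg)
  show ?thesis
  proof (rule that)
    show "(real \<sigma> + 1) * (H / \<mu>)\<^sup>2 \<ge> 0" by simp
    fix P :: "complex \<Rightarrow> complex" and w :: complex
    assume P: "P holomorphic_on UNIV" and w: "cmod w = 1"
    define g where "g = transfer_weight a w"
    have g: "\<mu> \<le> cmod g" unfolding g_def \<mu>_def by (rule norm_transfer_weight_ge[OF a w])
    then have "g \<noteq> 0" using \<mu> by auto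
    have "(deriv ^^ \<sigma>) (laguerre_transfer a P) w
        = (\<Sum>j\<le>\<sigma>. h j w * (deriv ^^ j) P (disc_automorphism a w))"
      by (rule expand[OF P w])
    also have "\<dots> = (\<Sum>j\<le>\<sigma>. h j w / g * laguerre_transfer a ((deriv ^^ j) P) w)"
      using \<open>g \<noteq> 0\<close> unfolding laguerre_transfer_def g_def by simp
    finally have eq: "(deriv ^^ \<sigma>) (laguerre_transfer a P) w
        = (\<Sum>j\<le>\<sigma>. h j w / g * laguerre_transfer a ((deriv ^^ j) P) w)" .
    have bound: "cmod (h j w / g) \<le> H / \<mu>" if "j \<le> \<sigma>" for j
      unfolding norm_divide using H[OF that w] g \<mu>
      by (intro frac_le) (auto intro: order_trans[OF norm_ge_zero])
    show "(cmod ((deriv ^^ \<sigma>) (laguerre_transfer a P) w))\<^sup>2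
        \<le> (real \<sigma> + 1) * (H / \<mu>)\<^sup>2 * (\<Sum>j\<le>\<sigma>. (cmod (laguerre_transfer a ((deriv ^^ j) P) w))\<^sup>2)"
      unfolding eq by (rule norm_sum_mult_square_le[OF bound])
  qed
qed

lemma laguerre_transfer_higher_deriv_bound:
  assumes a: "cmod a < 1"
  obtains K where "K \<ge> 0" and "\<And>P. P holomorphic_on UNIV \<Longrightarrow>
     (hardy_norm ((deriv ^^ \<sigma>) (laguerre_transfer a P)))\<^sup>2 \<le> K * (\<Sum>j\<le>\<sigma>. (hardy_norm ((deriv ^^ j) P))\<^sup>2)"
proof -
  obtain K where K: "K \<ge> 0" and pointwise: "\<And>P w. P holomorphic_on UNIV \<Longrightarrow> cmod w = 1 \<Longrightarrow>
     (cmod ((deriv ^^ \<sigma>) (laguerre_transfer a P) w))\<^sup>2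
       \<le> K * (\<Sum>j\<le>\<sigma>. (cmod (laguerre_transfer a ((deriv ^^ j) P) w))\<^sup>2)"
    using norm_higher_deriv_laguerre_transfer_le[OF a] by blast
  note R = transfer_radius_gt_1[OF a]
  show ?thesis
  proof (rule that[OF K])
    fix P :: "complex \<Rightarrow> complex" assume P: "P holomorphic_on UNIV"
    have Pj: "(deriv ^^ j) P holomorphic_on UNIV" for j by (rule holomorphic_higher_deriv[OF P open_UNIV])
    have "2 * pi * (hardy_norm ((deriv ^^ \<sigma>) (laguerre_transfer a P)))\<^sup>2
        \<le> K * (\<Sum>j\<le>\<sigma>. 2 * pi * (hardy_norm ((deriv ^^ j) P))\<^sup>2)"
    proof (rule has_integral_le[OF _ _ pointwise[OF P norm_cis]])
      show "((\<lambda>t. (cmod ((deriv ^^ \<sigma>) (laguerre_transfer a P) (cis t)))\<^sup>2) has_integral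
          2 * pi * (hardy_norm ((deriv ^^ \<sigma>) (laguerre_transfer a P)))\<^sup>2) {0..2*pi}"
        by (intro hardy_norm_square_integral(1) continuous_on_cis_holomorphic[OF _ R]
            holomorphic_higher_deriv holomorphic_laguerre_transfer[OF a P]) simp
      have "((\<lambda>t. (cmod (laguerre_transfer a ((deriv ^^ j) P) (cis t)))\<^sup>2) has_integral
          2 * pi * (hardy_norm ((deriv ^^ j) P))\<^sup>2) {0..2*pi}" for j
        using hardy_norm_square_integral(1)[OF continuous_on_cis_holomorphic[OF
            holomorphic_laguerre_transfer[OF a Pj] R]]
        unfolding hardy_norm_laguerre_transfer[OF a Pj] .
      then show "((\<lambda>t. K * (\<Sum>j\<le>\<sigma>. (cmod (laguerre_transfer a ((deriv ^^ j) P) (cis t)))\<^sup>2))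
          has_integral K * (\<Sum>j\<le>\<sigma>. 2 * pi * (hardy_norm ((deriv ^^ j) P))\<^sup>2)) {0..2*pi}"
        by (intro has_integral_mult_right has_integral_sum) auto
    qed
    then show "(hardy_norm ((deriv ^^ \<sigma>) (laguerre_transfer a P)))\<^sup>2
        \<le> K * (\<Sum>j\<le>\<sigma>. (hardy_norm ((deriv ^^ j) P))\<^sup>2)"
      by (simp flip: sum_distrib_left add: mult.left_commute)
  qed
qed

section \<open>The remainder of the Laguerre partial sums\<close>

lemma fact_div_fact_eq_prod:
  "s \<le> m \<Longrightarrow> fact m / fact (m - s) = (\<Prod>i<s. real (m - i))"
proof (induction s)
  case (Suc s)
  then have "fact (m - s) = real (m - s) * fact (m - Suc s)"
    by (metis Suc_diff_Suc Suc_le_lessD fact_Suc of_nat_Suc)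
  with Suc show ?case by (simp add: field_simps)
qed simp

lemma fact_div_fact_le_power: "s \<le> m \<Longrightarrow> fact m / fact (m - s) \<le> real m ^ s"
  using prod_mono[of "{..<s}" "\<lambda>i. real (m - i)" "\<lambda>_. real m"]
  by (simp add: fact_div_fact_eq_prod)

lemma fact_div_fact_ge_half_power: "2 * s \<le> m \<Longrightarrow> (real m / 2) ^ s \<le> fact m / fact (m - s)"
  using prod_mono[of "{..<s}" "\<lambda>_. real m / 2" "\<lambda>i. real (m - i)"]
  by (simp add: fact_div_fact_eq_prod of_nat_diff)

text \<open>\<open>m! / (m - \<sigma>)!\<close> is the factor between the \<open>m\<close>-th Taylor coefficient of \<open>F\<close> and the
  \<open>(m - \<sigma>)\<close>-th one of \<open>F^{(\<sigma>)}\<close>, cf. \<open>higher_deriv_parseval\<close>.\<close>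

lemma remainder_weight_le:
  assumes "n \<le> m"
  shows "real n ^ (2 * \<sigma>) \<le> (2 * real \<sigma>) ^ (2 * \<sigma>)
           + 4 ^ \<sigma> * (if \<sigma> \<le> m then (fact m / fact (m - \<sigma>))\<^sup>2 else 0)"
proof (cases "m < 2 * \<sigma>")
  case True
  then have "real n ^ (2 * \<sigma>) \<le> (2 * real \<sigma>) ^ (2 * \<sigma>)"
    using assms by (intro power_mono) auto
  then show ?thesis by (simp add: add_increasing2)
next
  case False
  define r :: real where "r = fact m / fact (m - \<sigma>)"
  have "real n ^ \<sigma> \<le> 2 ^ \<sigma> * (real m / 2) ^ \<sigma>"
    using assms by (simp add: power_divide power_mono)
  also have "\<dots> \<le> 2 ^ \<sigma> * r"
    using False unfolding r_def by (intro mult_left_mono fact_div_fact_ge_half_power) auto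
  finally have "(real n ^ \<sigma>)\<^sup>2 \<le> (2 ^ \<sigma> * r)\<^sup>2"
    by (intro power_mono) auto
  also have "\<dots> = 4 ^ \<sigma> * r\<^sup>2"
    by (simp add: power2_eq_square power_mult_distrib[symmetric] mult_ac)
  finally have "real n ^ (2 * \<sigma>) \<le> 4 ^ \<sigma> * r\<^sup>2"
    by (simp add: power_mult[symmetric] mult.commute)
  then show ?thesis
    using False unfolding r_def by (simp add: add_increasing)
qed

lemma higher_deriv_parseval:
  assumes F: "F holomorphic_on ball 0 R" and R: "R > 1"
  shows "(\<lambda>m. if j \<le> m then (fact m / fact (m - j) * cmod (taylor_coeff F m))\<^sup>2 else 0)
           sums (hardy_norm ((deriv ^^ j) F))\<^sup>2"
proof -
  have "(deriv ^^ j) F holomorphic_on ball 0 R" by (rule holomorphic_higher_deriv[OF F open_ball])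
  from laguerre_expansion_parseval[OF _ has_laguerre_expansion_taylor[OF this R]]
  have "(\<lambda>i. (cmod (taylor_coeff ((deriv ^^ j) F) i))\<^sup>2) sums (hardy_norm ((deriv ^^ j) F))\<^sup>2"
    by simp
  moreover have "taylor_coeff ((deriv ^^ j) F) i = fact (i + j) / fact i * taylor_coeff F (i + j)" for i
    unfolding taylor_coeff_def by (simp add: funpow_add)
  ultimately have "(\<lambda>i. (fact (i + j) / fact (i + j - j) * cmod (taylor_coeff F (i + j)))\<^sup>2)
      sums (hardy_norm ((deriv ^^ j) F))\<^sup>2"
    by (simp add: norm_mult norm_divide norm_fact)
  moreover have "(\<Sum>i<j. if j \<le> i then (fact i / fact (i - j) * cmod (taylor_coeff F i))\<^sup>2 else 0) = 0"
    by simp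
  ultimately show ?thesis
    using sums_iff_shift[of "\<lambda>m. if j \<le> m then (fact m / fact (m - j) * cmod (taylor_coeff F m))\<^sup>2 else 0" j]
    by simp
qed

lemma laguerre_remainder_bound:
  assumes a: "cmod a < 1" and P: "P holomorphic_on UNIV"
  shows "real n ^ (2 * \<sigma>) * (hardy_norm (laguerre_remainder a n P))\<^sup>2
    \<le> (2 * real \<sigma>) ^ (2 * \<sigma>) * (hardy_norm P)\<^sup>2
      + 4 ^ \<sigma> * (hardy_norm ((deriv ^^ \<sigma>) (laguerre_transfer a P)))\<^sup>2"
proof -
  define c where "c = taylor_coeff (laguerre_transfer a P)"
  note expand = has_laguerre_expansion_transfer[OF a P, folded c_def]
  note remainder = laguerre_expansion_parseval[OF a laguerre_expansion_remainder[OF a expand, of n]]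
  note derivative = higher_deriv_parseval[OF holomorphic_laguerre_transfer[OF a P]
      transfer_radius_gt_1[OF a], of \<sigma>, folded c_def]
  have "real n ^ (2 * \<sigma>) * (cmod (if m < n then 0 else c m))\<^sup>2
      \<le> (2 * real \<sigma>) ^ (2 * \<sigma>) * (cmod (c m))\<^sup>2
        + 4 ^ \<sigma> * (if \<sigma> \<le> m then (fact m / fact (m - \<sigma>) * cmod (c m))\<^sup>2 else 0)" for m
    using mult_right_mono[OF remainder_weight_le[of n m \<sigma>], of "(cmod (c m))\<^sup>2"]
    by (cases "m < n") (auto simp: algebra_simps power_mult_distrib power_divide)
  then show ?thesis
    by (rule sums_le[OF _ sums_mult[OF remainder]
        sums_add[OF sums_mult[OF laguerre_expansion_parseval[OF a expand]] sums_mult[OF derivative]]])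
qed

section \<open>Polynomials and truncated Taylor series\<close>

definition coeff_trunc :: "(nat \<Rightarrow> complex) \<Rightarrow> nat \<Rightarrow> nat \<Rightarrow> complex" where
  "coeff_trunc c N k = (if k < N then c k else 0)"

lemma taylor_fun_coeff_trunc: "taylor_fun (coeff_trunc c N) = (\<lambda>z. \<Sum>k<N. c k * z ^ k)"
proof
  fix z
  show "taylor_fun (coeff_trunc c N) z = (\<Sum>k<N. c k * z ^ k)"
    unfolding taylor_fun_def by (subst suminf_finite[of "{..<N}"]) (auto simp: coeff_trunc_def)
qed

lemma taylor_coeff_poly:
  "taylor_coeff (\<lambda>z. \<Sum>k<N. c k * z ^ k) m = (if m < N then c m else 0)"
proof -
  have "(\<lambda>z. \<Sum>k<N. c k * z ^ k) has_fps_expansion (\<Sum>k<N. fps_const (c k) * fps_X ^ k)"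
    by (intro fps_expansion_intros)
  from fps_nth_fps_expansion[OF this, of m] show ?thesis
    by (simp add: taylor_coeff_def fps_sum_nth fps_X_power_nth if_distrib[where f = "\<lambda>x. _ * x"]
        cong: if_cong)
qed

lemma norm_one_plus_of_nat_power: "cmod (1 + of_nat k ^ \<sigma>) = 1 + real k ^ \<sigma>"
proof -
  have "(1 + of_nat k ^ \<sigma> :: complex) = of_real (1 + real k ^ \<sigma>)" by simp
  then show ?thesis by (simp only: norm_of_real) simp
qed

lemma H2_sigma_norm_square:
  "in_H2_sigma \<sigma> c \<Longrightarrow> (\<lambda>k. (cmod ((1 + of_nat k ^ \<sigma>) * c k))\<^sup>2) sums (H2_sigma_norm \<sigma> c)\<^sup>2"
  unfolding in_H2_sigma_def H2_sigma_norm_def by (simp add: summable_sums suminf_nonneg)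

lemma hardy_norm_higher_deriv_trunc_le:
  assumes c: "in_H2_sigma \<sigma> c" and j: "j \<le> \<sigma>"
  shows "(hardy_norm ((deriv ^^ j) (taylor_fun (coeff_trunc c N))))\<^sup>2 \<le> (H2_sigma_norm \<sigma> c)\<^sup>2"
proof -
  define P where "P = taylor_fun (coeff_trunc c N)"
  have P: "P holomorphic_on ball 0 2"
    unfolding P_def taylor_fun_coeff_trunc by (intro holomorphic_intros)
  have coeff: "taylor_coeff P m = coeff_trunc c N m" for m
    unfolding P_def taylor_fun_coeff_trunc taylor_coeff_poly coeff_trunc_def ..
  have "(if j \<le> m then (fact m / fact (m - j) * cmod (taylor_coeff P m))\<^sup>2 else 0)
      \<le> (cmod ((1 + of_nat m ^ \<sigma>) * c m))\<^sup>2" for m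
  proof (cases "j \<le> m")
    case True
    have "real m ^ j \<le> 1 + real m ^ \<sigma>"
      using j by (cases "m = 0") (auto simp: power_0_left intro: order_trans[OF power_increasing])
    then have "fact m / fact (m - j) \<le> 1 + real m ^ \<sigma>"
      using fact_div_fact_le_power[OF True] by linarith
    moreover have "cmod (taylor_coeff P m) \<le> cmod (c m)"
      by (simp add: coeff coeff_trunc_def)
    ultimately have "fact m / fact (m - j) * cmod (taylor_coeff P m) \<le> cmod ((1 + of_nat m ^ \<sigma>) * c m)"
      unfolding norm_mult norm_one_plus_of_nat_power by (rule mult_mono) auto
    then show ?thesis using True by (simp add: power_mono)
  qed simp
  then show ?thesis
    using sums_le[OF _ higher_deriv_parseval[OF P, of j] H2_sigma_norm_square[OF c]]
    unfolding P_def by simp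
qed

lemma laguerre_remainder_trunc_le:
  assumes a: "cmod a < 1" and c: "in_H2_sigma \<sigma> c" and K: "K \<ge> 0"
    and transfer_bound: "\<And>P. P holomorphic_on UNIV \<Longrightarrow>
      (hardy_norm ((deriv ^^ \<sigma>) (laguerre_transfer a P)))\<^sup>2 \<le> K * (\<Sum>j\<le>\<sigma>. (hardy_norm ((deriv ^^ j) P))\<^sup>2)"
  shows "real n ^ \<sigma> * hardy_norm (laguerre_remainder a n (taylor_fun (coeff_trunc c N)))
    \<le> sqrt ((2 * real \<sigma>) ^ (2 * \<sigma>) + 4 ^ \<sigma> * K * (real \<sigma> + 1)) * H2_sigma_norm \<sigma> c"
proof -
  define P where "P = taylor_fun (coeff_trunc c N)"
  define A :: real where "A = (2 * real \<sigma>) ^ (2 * \<sigma>)"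
  define B where "B = (H2_sigma_norm \<sigma> c)\<^sup>2"
  have P: "P holomorphic_on UNIV"
    unfolding P_def taylor_fun_coeff_trunc by (intro holomorphic_intros)
  have derivs: "(hardy_norm ((deriv ^^ j) P))\<^sup>2 \<le> B" if "j \<le> \<sigma>" for j
    unfolding P_def B_def by (rule hardy_norm_higher_deriv_trunc_le[OF c that])
  have "(\<Sum>j\<le>\<sigma>. (hardy_norm ((deriv ^^ j) P))\<^sup>2) \<le> (\<Sum>j\<le>\<sigma>. B)"
    by (rule sum_mono) (simp add: derivs)
  then have "(\<Sum>j\<le>\<sigma>. (hardy_norm ((deriv ^^ j) P))\<^sup>2) \<le> (real \<sigma> + 1) * B"
    by (simp add: algebra_simps)
  then have "(hardy_norm ((deriv ^^ \<sigma>) (laguerre_transfer a P)))\<^sup>2 \<le> K * ((real \<sigma> + 1) * B)"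
    using transfer_bound[OF P] mult_left_mono[OF _ K] order_trans by blast
  then have "4 ^ \<sigma> * (hardy_norm ((deriv ^^ \<sigma>) (laguerre_transfer a P)))\<^sup>2
      \<le> 4 ^ \<sigma> * (K * ((real \<sigma> + 1) * B))"
    by (rule mult_left_mono) simp
  moreover have "A * (hardy_norm P)\<^sup>2 \<le> A * B"
    using derivs[of 0] unfolding A_def by (intro mult_left_mono) simp_all
  moreover have "(real n ^ \<sigma> * hardy_norm (laguerre_remainder a n P))\<^sup>2
      = real n ^ (2 * \<sigma>) * (hardy_norm (laguerre_remainder a n P))\<^sup>2"
    by (simp add: power_mult_distrib power_mult[symmetric] mult.commute)
  ultimately have "(real n ^ \<sigma> * hardy_norm (laguerre_remainder a n P))\<^sup>2
      \<le> A * B + 4 ^ \<sigma> * (K * ((real \<sigma> + 1) * B))"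
    using laguerre_remainder_bound[OF a P, of n \<sigma>] unfolding A_def by linarith
  also have "\<dots> = (sqrt (A + 4 ^ \<sigma> * K * (real \<sigma> + 1)) * H2_sigma_norm \<sigma> c)\<^sup>2"
    unfolding B_def A_def using K by (simp add: power_mult_distrib algebra_simps)
  finally have square: "(real n ^ \<sigma> * hardy_norm (laguerre_remainder a n P))\<^sup>2
      \<le> (sqrt (A + 4 ^ \<sigma> * K * (real \<sigma> + 1)) * H2_sigma_norm \<sigma> c)\<^sup>2" .
  have "0 \<le> sqrt (A + 4 ^ \<sigma> * K * (real \<sigma> + 1)) * H2_sigma_norm \<sigma> c"
    using K c unfolding A_def H2_sigma_norm_def in_H2_sigma_def
    by (intro mult_nonneg_nonneg real_sqrt_ge_zero add_nonneg_nonneg suminf_nonneg) auto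
  with square show ?thesis
    unfolding P_def A_def by (rule power2_le_imp_le)
qed

lemma in_H2_sigma_summable_norm:
  assumes \<sigma>: "\<sigma> > 0" and c: "in_H2_sigma \<sigma> c"
  shows "summable (\<lambda>k. cmod (c k))"
proof (rule summable_comparison_test)
  define W where "W k = (cmod ((1 + of_nat k ^ \<sigma>) * c k))\<^sup>2" for k
  have "summable (\<lambda>k. inverse (real (Suc k) ^ 2))"
    using inverse_power_summable[of 2, where 'a = real]
      summable_Suc_iff[of "\<lambda>k. inverse (real k ^ 2)"] by simp
  then show "summable (\<lambda>k. (inverse (real (Suc k) ^ 2) + W k) / 2)"
    using c unfolding in_H2_sigma_def W_def by (intro summable_divide summable_add)
  show "\<exists>N. \<forall>k\<ge>N. norm (cmod (c k)) \<le> (inverse (real (Suc k) ^ 2) + W k) / 2"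
  proof (intro exI allI impI)
    fix k :: nat
    define x where "x = inverse (real (Suc k))"
    define y where "y = real (Suc k) * cmod (c k)"
    have "k \<le> k ^ \<sigma>" using \<sigma> by (cases "k = 0") (simp_all add: self_le_power)
    then have "real k \<le> real k ^ \<sigma>" by (metis of_nat_le_iff of_nat_power)
    then have "y \<le> cmod ((1 + of_nat k ^ \<sigma>) * c k)"
      unfolding y_def norm_mult norm_one_plus_of_nat_power by (intro mult_right_mono) auto
    then have "y\<^sup>2 \<le> W k" unfolding W_def by (rule power_mono) (simp add: y_def)
    have "norm (cmod (c k)) = x * y" unfolding x_def y_def by simp
    also have "\<dots> \<le> (x\<^sup>2 + y\<^sup>2) / 2" using sum_squares_bound[of x y] by simp
    also have "\<dots> \<le> (inverse (real (Suc k) ^ 2) + W k) / 2"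
      using \<open>y\<^sup>2 \<le> W k\<close> unfolding x_def by (simp add: power_inverse)
    finally show "norm (cmod (c k)) \<le> (inverse (real (Suc k) ^ 2) + W k) / 2" .
  qed
qed

lemma taylor_fun_trunc_uniform_limit:
  assumes c: "summable (\<lambda>k. cmod (c k))"
  shows "uniform_limit UNIV (\<lambda>N t. taylor_fun (coeff_trunc c N) (cis t)) (\<lambda>t. taylor_fun c (cis t))
           sequentially"
  unfolding taylor_fun_coeff_trunc taylor_fun_def
  by (rule Weierstrass_m_test[OF _ c]) (simp add: norm_mult norm_power)

lemma laguerre_remainder_trunc_tendsto:
  assumes a: "cmod a < 1" and c: "summable (\<lambda>k. cmod (c k))"
  shows "(\<lambda>N. hardy_norm (laguerre_remainder a n (taylor_fun (coeff_trunc c N))))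
           \<longlonglongrightarrow> hardy_norm (laguerre_remainder a n (taylor_fun c))"
proof -
  define f where "f N = taylor_fun (coeff_trunc c N)" for N
  have f_lim: "uniform_limit {0..2*pi} (\<lambda>N t. f N (cis t)) (\<lambda>t. taylor_fun c (cis t)) sequentially"
    unfolding f_def by (rule uniform_limit_on_subset[OF taylor_fun_trunc_uniform_limit[OF c]]) simp
  have f_cont: "continuous_on UNIV (\<lambda>t. f N (cis t))" for N
    unfolding f_def taylor_fun_coeff_trunc by (intro continuous_intros)
  note B_cont = continuous_on_laguerre_cis[OF a]
  have E_cont: "continuous_on UNIV (\<lambda>t. laguerre_remainder a n g (cis t))"
    if "continuous_on UNIV (\<lambda>t. g (cis t))" for g
    unfolding laguerre_remainder_def by (intro continuous_intros that B_cont)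
  have coeff_lim: "(\<lambda>N. hardy_inner (f N) (laguerre a l)) \<longlonglongrightarrow> hardy_inner (taylor_fun c) (laguerre a l)"
    for l
    by (rule hardy_inner_tendsto_uniform[where g = "\<lambda>_. laguerre a l", OF f_lim uniform_limit_const
          f_cont B_cont])
  have B_bounded: "bounded ((\<lambda>t. laguerre a l (cis t)) ` {0..2*pi})" for l
    by (intro compact_imp_bounded compact_continuous_image compact_Icc continuous_on_subset[OF B_cont])
       simp
  have "uniform_limit {0..2*pi} (\<lambda>N t. laguerre_remainder a n (f N) (cis t))
      (\<lambda>t. laguerre_remainder a n (taylor_fun c) (cis t)) sequentially"
    unfolding laguerre_remainder_def
    by (intro uniform_limit_minus f_lim uniform_limit_sum uniform_limit_tendsto_mult coeff_lim B_bounded)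
       simp
  then have "(\<lambda>N. hardy_inner (laguerre_remainder a n (f N)) (laguerre_remainder a n (f N)))
      \<longlonglongrightarrow> hardy_inner (laguerre_remainder a n (taylor_fun c)) (laguerre_remainder a n (taylor_fun c))"
    using E_cont[OF f_cont] by (intro hardy_inner_tendsto_uniform)
  then show ?thesis unfolding hardy_norm_def f_def by (intro tendsto_real_sqrt tendsto_Re)
qed

theorem theorem8:
  fixes \<sigma> :: nat and a :: complex
  assumes "\<sigma> > 0" and "cmod a < 1"
  shows "\<exists>C::real. \<forall>c n. in_H2_sigma \<sigma> c \<longrightarrow> n \<ge> 1 \<longrightarrow>
           hardy_norm (\<lambda>z. taylor_fun c z
              - (\<Sum>l=1..n. hardy_inner (taylor_fun c) (laguerre a l) * laguerre a l z))
           \<le> C * (1 / real n ^ \<sigma>) * H2_sigma_norm \<sigma> c"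
proof -
  obtain K where K: "K \<ge> 0" and transfer_bound: "\<And>P. P holomorphic_on UNIV \<Longrightarrow>
      (hardy_norm ((deriv ^^ \<sigma>) (laguerre_transfer a P)))\<^sup>2 \<le> K * (\<Sum>j\<le>\<sigma>. (hardy_norm ((deriv ^^ j) P))\<^sup>2)"
    using laguerre_transfer_higher_deriv_bound[OF assms(2)] by blast
  define C where "C = sqrt ((2 * real \<sigma>) ^ (2 * \<sigma>) + 4 ^ \<sigma> * K * (real \<sigma> + 1))"
  show ?thesis
  proof (intro exI allI impI)
    fix c :: "nat \<Rightarrow> complex" and n :: nat
    assume c: "in_H2_sigma \<sigma> c" and n: "n \<ge> 1"
    have "real n ^ \<sigma> * hardy_norm (laguerre_remainder a n (taylor_fun c)) \<le> C * H2_sigma_norm \<sigma> c"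
    proof (rule LIMSEQ_le_const2)
      show "(\<lambda>N. real n ^ \<sigma> * hardy_norm (laguerre_remainder a n (taylor_fun (coeff_trunc c N))))
          \<longlonglongrightarrow> real n ^ \<sigma> * hardy_norm (laguerre_remainder a n (taylor_fun c))"
        by (intro tendsto_mult_left laguerre_remainder_trunc_tendsto[OF assms(2)]
            in_H2_sigma_summable_norm[OF assms(1) c])
      show "\<exists>M. \<forall>N\<ge>M. real n ^ \<sigma> * hardy_norm (laguerre_remainder a n (taylor_fun (coeff_trunc c N)))
          \<le> C * H2_sigma_norm \<sigma> c"
        using laguerre_remainder_trunc_le[OF assms(2) c K transfer_bound] unfolding C_def by blast
    qed
    moreover have "x \<le> C * (1 / r) * H" if "r * x \<le> C * H" and "r > 0" for x r H :: real
      using that by (simp add: field_simps)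
    ultimately show "hardy_norm (\<lambda>z. taylor_fun c z
              - (\<Sum>l=1..n. hardy_inner (taylor_fun c) (laguerre a l) * laguerre a l z))
           \<le> C * (1 / real n ^ \<sigma>) * H2_sigma_norm \<sigma> c"
      using n unfolding laguerre_remainder_def by simp
  qed
qed

end
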